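(* Let $l_1$ be a sufficiently large perfect square and put $N_1 = 2^{\sqrt{l_1}}$. Define sequences $(N_j)_{j\ge 1}$ and $(l_j)_{j \ge 1}$ recursively by \[ N_{j+1} = \big(\lfloor \sqrt{N_j}\rfloor\big)! \quad\text{and}\quad l_{j+1} = l_j \cdot N_j \qquad (j \ge 1). \] Then \[ \lim_{j\to\infty} \frac{\log N_j}{\sqrt{l_j}} = 0 \quad\text{and}\quad \lim_{j\to\infty} \frac{\log N_j}{l_j^{\beta}} = \infty \ \text{ for every } \beta < 1/2. \] *)

theory Defs
  imports "HOL-Analysis.Analysis" "HOL-Library.Discrete_Functions"
begin

text \<open>Given a perfect square l1 = m^2, the pair (N_j, l_j) for j \<ge> 1,
  indexed by k = j - 1: seqNL l1 0 = (N_1, l_1), seqNL l1 (Suc k) = (N_{k+2}, l_{k+2}).\<close>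
primrec seqNL :: "nat \<Rightarrow> nat \<Rightarrow> nat \<times> nat" where
  "seqNL l1 0 = (2 ^ floor_sqrt l1, l1)"
| "seqNL l1 (Suc k) =
     (let (N, l) = seqNL l1 k in (fact (floor_sqrt N), l * N))"

definition N_seq :: "nat \<Rightarrow> nat \<Rightarrow> nat" where
  "N_seq l1 j = fst (seqNL l1 (j - 1))"

definition l_seq :: "nat \<Rightarrow> nat \<Rightarrow> nat" where
  "l_seq l1 j = snd (seqNL l1 (j - 1))"

end

theory Submission
  imports Defs "HOL-Real_Asymp.Real_Asymp"
begin

text \<open>Stirling-type bounds \<open>2 ^ (s - 1) \<le> s! \<le> s ^ s\<close> for \<open>s = \<lfloor>\<surd>N\<rfloor>\<close> show that
  \<open>ln N\<^sub>j\<^sub>+\<^sub>1\<close> lies between \<open>(\<surd>N\<^sub>j - 2) ln 2\<close> and \<open>\<surd>N\<^sub>j ln N\<^sub>j / 2\<close>, while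
  \<open>l\<^sub>j\<^sub>+\<^sub>1 = l\<^sub>j N\<^sub>j\<close>. Hence \<open>ln N\<^sub>j / \<surd>l\<^sub>j\<close> at least halves at every step, and for
  \<open>\<beta> < 1/2\<close> the ratio \<open>ln N\<^sub>j / l\<^sub>j\<^sup>\<beta>\<close> at least doubles once \<open>N\<^sub>j\<close> is so large that
  \<open>\<surd>N\<close> dominates \<open>N\<^sup>\<beta> ln N\<close>; and \<open>N\<^sub>j\<close> does grow, because \<open>\<lfloor>\<surd>N\<rfloor>! > N\<close> for \<open>N \<ge> 25\<close>.\<close>

lemma Suc_square_le_fact:
  fixes n :: nat
  assumes "5 \<le> n"
  shows "(n + 1)^2 \<le> fact n"
  using assms
proof (induction n rule: dec_induct)
  case base
  show ?case by (simp add: fact_numeral)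
next
  case (step n)
  have "2 \<le> n * n"
    using mult_le_mono[OF step.hyps(1) step.hyps(1)] by simp
  then have "(Suc n + 1)^2 \<le> 2 * (n + 1)^2"
    by (simp add: power2_eq_square algebra_simps)
  also have "\<dots> \<le> (n + 1) * (n + 1)^2"
    using step.hyps by (intro mult_right_mono) simp_all
  also have "\<dots> \<le> (n + 1) * fact n"
    using step.IH by (rule mult_left_mono) simp
  finally show ?case by simp
qed

lemma two_power_le_fact: "2 ^ (n - 1) \<le> (fact n :: nat)"
proof (induction n)
  case (Suc n)
  then show ?case
    by (cases n) (simp_all add: mult_mono)
qed simp

lemma ln_fact_floor_sqrt_le:
  assumes "1 \<le> N"
  shows "ln (fact (floor_sqrt N)) \<le> sqrt (real N) * ln (real N) / 2"
proof -
  let ?s = "floor_sqrt N"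
  have s: "1 \<le> ?s"
    using assms by (simp add: le_floor_sqrtI)
  have s_le: "real ?s \<le> sqrt (real N)"
    using floor_sqrt_power2_le[of N] by (simp add: real_le_rsqrt flip: of_nat_power)
  have "ln (fact ?s) \<le> ln (real (?s ^ ?s))"
    using fact_le_power[of ?s] s by (intro ln_mono) (simp_all flip: of_nat_power)
  also have "\<dots> = real ?s * ln (real ?s)"
    using s by (simp add: ln_realpow)
  also have "\<dots> \<le> sqrt (real N) * ln (sqrt (real N))"
    using assms s s_le by (intro mult_mono ln_mono) simp_all
  also have "\<dots> = sqrt (real N) * ln (real N) / 2"
    using assms by (simp add: ln_sqrt)
  finally show ?thesis .
qed

lemma ln_fact_floor_sqrt_ge:
  assumes "4 \<le> N"
  shows "(sqrt (real N) - 2) * ln 2 \<le> ln (fact (floor_sqrt N))"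
proof -
  let ?s = "floor_sqrt N"
  have s: "2 \<le> ?s"
    using assms by (simp add: le_floor_sqrtI)
  have "real N < (real ?s + 1)^2"
    using Suc_floor_sqrt_power2_gt[of N] by (simp add: add.commute flip: of_nat_power of_nat_Suc)
  then have "sqrt (real N) < real ?s + 1"
    by (simp add: real_less_lsqrt)
  then have "(sqrt (real N) - 2) * ln 2 \<le> (real ?s - 1) * ln 2"
    by simp
  also have "\<dots> = ln (real (2 ^ (?s - 1)))"
    using s by (simp add: ln_realpow of_nat_diff)
  also have "\<dots> \<le> ln (real (fact ?s))"
    using two_power_le_fact[of ?s] by (intro ln_mono) (simp_all only: of_nat_le_iff, simp)
  also have "\<dots> = ln (fact ?s)"
    by (simp only: of_nat_fact)
  finally show ?thesis .
qed

lemma less_fact_floor_sqrt: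
  assumes "25 \<le> N"
  shows "N < fact (floor_sqrt N)"
proof -
  have "5 \<le> floor_sqrt N"
    using assms by (simp add: le_floor_sqrtI)
  then have "(floor_sqrt N + 1)^2 \<le> fact (floor_sqrt N)"
    by (rule Suc_square_le_fact)
  then show ?thesis
    using Suc_floor_sqrt_power2_gt[of N] by simp
qed

lemma LIMSEQ_zero_if_eventually_contracting:
  fixes r :: "nat \<Rightarrow> real"
  assumes "0 \<le> c" "c < 1" and contr: "\<forall>k\<ge>K. 0 \<le> r k \<and> r (Suc k) \<le> c * r k"
  shows "r \<longlonglongrightarrow> 0"
proof -
  have bound: "r (n + K) \<le> c ^ n * r K" for n
  proof (induction n)
    case (Suc n)
    have "r (Suc n + K) \<le> c * r (n + K)"
      using contr by simp
    also have "\<dots> \<le> c ^ Suc n * r K"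
      using mult_left_mono[OF Suc.IH \<open>0 \<le> c\<close>] by (simp add: mult.assoc)
    finally show ?case .
  qed simp
  have lim: "(\<lambda>n. c ^ n * r K) \<longlonglongrightarrow> 0"
    using assms by (intro tendsto_mult_left_zero LIMSEQ_power_zero) simp
  have nonneg: "0 \<le> r (n + K)" for n
    using contr by simp
  have "(\<lambda>n. r (n + K)) \<longlonglongrightarrow> 0"
    by (rule tendsto_sandwich[OF _ _ tendsto_const lim]) (auto intro: always_eventually nonneg bound)
  then show ?thesis
    by (rule LIMSEQ_offset)
qed

lemma filterlim_at_top_if_eventually_expanding:
  fixes r :: "nat \<Rightarrow> real"
  assumes "1 < c" "0 < r K" and exp: "\<forall>k\<ge>K. c * r k \<le> r (Suc k)"
  shows "filterlim r at_top sequentially"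
proof -
  have bound: "r K * c ^ n \<le> r (n + K)" for n
  proof (induction n)
    case (Suc n)
    have "r K * c ^ Suc n \<le> c * r (n + K)"
      using Suc.IH \<open>1 < c\<close> by (simp add: mult_left_mono mult.left_commute)
    also have "\<dots> \<le> r (Suc n + K)"
      using exp by simp
    finally show ?case .
  qed simp
  have "filterlim (\<lambda>n. r K * c ^ n) at_top sequentially"
    using assms by real_asymp
  then have shifted: "filterlim (\<lambda>n. r (n + K)) at_top sequentially"
    by (rule filterlim_at_top_mono) (simp add: bound)
  show ?thesis
    unfolding filterlim_at_top
  proof
    fix Z :: real
    have "eventually (\<lambda>n. Z \<le> r (n + K)) sequentially"
      using shifted unfolding filterlim_at_top by blast
    then show "eventually (\<lambda>n. Z \<le> r n) sequentially"
      by (rule eventually_sequentially_seg[THEN iffD1])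
  qed
qed

text \<open>Since \<open>N_seq l1 0 = N_seq l1 1\<close> (truncated subtraction in the index), the
  recursion only holds from \<open>j = 1\<close> on.\<close>

lemma N_seq_Suc: "0 < j \<Longrightarrow> N_seq l1 (Suc j) = fact (floor_sqrt (N_seq l1 j))"
  by (cases j) (simp_all add: N_seq_def split_def Let_def)

lemma l_seq_Suc: "0 < j \<Longrightarrow> l_seq l1 (Suc j) = l_seq l1 j * N_seq l1 j"
  by (cases j) (simp_all add: N_seq_def l_seq_def split_def Let_def)

lemma N_seq_pos: "0 < N_seq l1 j"
  by (cases j; cases "j - 1") (simp_all add: N_seq_def split_def Let_def)

lemma l_seq_pos:
  assumes "0 < l1"
  shows "0 < l_seq l1 j"
proof (induction j)
  case (Suc j)
  show ?case
  proof (cases j)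
    case 0
    then show ?thesis using assms by (simp add: l_seq_def)
  next
    case (Suc i)
    then show ?thesis using Suc.IH N_seq_pos[of l1 j] by (simp add: l_seq_Suc)
  qed
qed (use assms in \<open>simp add: l_seq_def\<close>)

lemma N_seq_ge:
  assumes "25 \<le> l1"
  shows "j + 24 \<le> N_seq l1 j"
proof -
  have "(2::nat) ^ 5 \<le> 2 ^ floor_sqrt l1"
    using assms by (intro power_increasing le_floor_sqrtI) simp_all
  then have N1: "32 \<le> N_seq l1 1"
    by (simp add: N_seq_def)
  show ?thesis
  proof (induction j)
    case 0
    show ?case using N1 by (simp add: N_seq_def)
  next
    case (Suc j)
    show ?case
    proof (cases j)
      case (Suc i)
      then show ?thesis
        using Suc.IH less_fact_floor_sqrt[of "N_seq l1 j"] by (simp add: N_seq_Suc)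
    qed (use N1 in simp)
  qed
qed

lemma LIMSEQ_ln_N_seq_div_sqrt_l_seq:
  assumes "0 < l1"
  shows "(\<lambda>j. ln (real (N_seq l1 j)) / sqrt (real (l_seq l1 j))) \<longlonglongrightarrow> 0"
proof -
  define r where "r j = ln (real (N_seq l1 j)) / sqrt (real (l_seq l1 j))" for j
  have "0 \<le> r j \<and> r (Suc j) \<le> 1/2 * r j" if "1 \<le> j" for j
  proof
    let ?N = "N_seq l1 j" and ?l = "l_seq l1 j"
    have N: "1 \<le> ?N"
      using N_seq_pos[of l1 j] by simp
    have l: "0 < sqrt (real ?l)"
      using l_seq_pos[OF assms] by simp
    show "0 \<le> r j"
      using N by (simp add: r_def)
    have "r (Suc j) = ln (fact (floor_sqrt ?N)) / (sqrt (real ?l) * sqrt (real ?N))"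
      using that by (simp add: r_def N_seq_Suc l_seq_Suc real_sqrt_mult)
    also have "\<dots> \<le> (sqrt (real ?N) * ln (real ?N) / 2) / (sqrt (real ?l) * sqrt (real ?N))"
      using ln_fact_floor_sqrt_le[OF N] l N by (intro divide_right_mono) auto
    also have "\<dots> = 1/2 * r j"
      using l N by (simp add: r_def field_simps)
    finally show "r (Suc j) \<le> 1/2 * r j" .
  qed
  then have "r \<longlonglongrightarrow> 0"
    by (intro LIMSEQ_zero_if_eventually_contracting[where c = "1/2" and K = 1]) auto
  then show ?thesis
    by (simp add: r_def[abs_def])
qed

lemma filterlim_ln_N_seq_div_l_seq_powr:
  assumes "25 \<le> l1" "\<beta> < 1/2"
  shows "filterlim (\<lambda>j. ln (real (N_seq l1 j)) / real (l_seq l1 j) powr \<beta>) at_top sequentially"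
proof -
  define t where "t j = ln (real (N_seq l1 j)) / real (l_seq l1 j) powr \<beta>" for j
  have "eventually (\<lambda>x::real. 2 * x powr \<beta> * ln x \<le> (sqrt x - 2) * ln 2) at_top"
    using assms(2) by real_asymp
  then obtain X where X: "\<And>x. X \<le> x \<Longrightarrow> 2 * x powr \<beta> * ln x \<le> (sqrt x - 2) * ln 2"
    by (auto simp: eventually_at_top_linorder)
  define K where "K = max 1 (nat \<lceil>X\<rceil>)"
  have N: "j + 24 \<le> N_seq l1 j" for j
    using N_seq_ge[OF assms(1)] .
  have l: "0 < real (l_seq l1 j) powr \<beta>" for j
    using l_seq_pos[of l1 j] assms(1) by simp
  have "0 < t K"
    using N[of K] l[of K] by (simp add: t_def)
  moreover have "2 * t j \<le> t (Suc j)" if "K \<le> j" for j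
  proof -
    let ?N = "N_seq l1 j" and ?l = "l_seq l1 j"
    have "X \<le> real ?N"
      using N[of j] that unfolding K_def by linarith
    then have h: "2 * real ?N powr \<beta> * ln (real ?N) \<le> (sqrt (real ?N) - 2) * ln 2"
      by (rule X)
    have Np: "0 < real ?N powr \<beta>"
      using N[of j] by simp
    have "2 * t j = 2 * real ?N powr \<beta> * ln (real ?N) / (real ?l powr \<beta> * real ?N powr \<beta>)"
      using Np l[of j] by (simp add: t_def field_simps)
    also have "\<dots> \<le> ln (fact (floor_sqrt ?N)) / (real ?l powr \<beta> * real ?N powr \<beta>)"
      using h ln_fact_floor_sqrt_ge[of ?N] N[of j] Np l[of j] by (intro divide_right_mono) auto
    also have "\<dots> = t (Suc j)"
      using that by (simp add: K_def t_def N_seq_Suc l_seq_Suc powr_mult)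
    finally show ?thesis .
  qed
  ultimately have "filterlim t at_top sequentially"
    by (intro filterlim_at_top_if_eventually_expanding[where c = 2]) auto
  then show ?thesis
    by (simp add: t_def[abs_def])
qed

theorem lemma3p1:
  "\<exists>L::nat. \<forall>l1 m::nat. l1 = m\<^sup>2 \<longrightarrow> l1 \<ge> L \<longrightarrow>
     ((\<lambda>j. ln (real (N_seq l1 j)) / sqrt (real (l_seq l1 j))) \<longlonglongrightarrow> 0) \<and>
     (\<forall>\<beta>::real. \<beta> < 1/2 \<longrightarrow>
        filterlim (\<lambda>j. ln (real (N_seq l1 j)) / real (l_seq l1 j) powr \<beta>) at_top sequentially)"
  by (intro exI[of _ 25] allI impI conjI LIMSEQ_ln_N_seq_div_sqrt_l_seq
      filterlim_ln_N_seq_div_l_seq_powr) linarith+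

end
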